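(* Let $(M,g)$ be a complete Riemannian manifold and let $V\in L^\infty_{\rm loc}(M)$ with $V\ge1$ a.e., $\operatorname{ess\,lim}_{d(p,p_0)\to\infty}V(p)=\infty$, satisfying the doubling condition. Then $$\lim_{\delta\to0}\frac{\int_M e^{-tV(x)}\,dx}{\int_M e^{-t(1-\delta)V(x)}\,dx}=1$$ uniformly in $t\in(0,1]$.
   Context: $d$ is the Riemannian distance, $p_0\in M$ fixed, $dx$ and $|\cdot|$ the Riemannian measure. $\operatorname{ess\,lim}V=\infty$ means: for every $L>0$ there is $R>0$ with $V(p)\ge L$ for a.e. $p$ with $d(p,p_0)\ge R$. Doubling condition: with $\sigma(\lambda)=|\{x:V(x)\le\lambda\}|$, there are $C_V,\lambda_0>0$ with $\sigma(2\lambda)\le C_V\sigma(\lambda)$ for all $\lambda\ge\lambda_0$. *)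

theory Defs
  imports "HOL-Analysis.Analysis"
begin

text \<open>Abstract stand-in for a complete Riemannian manifold with its Riemannian
measure: a proper (Heine-Borel) metric space with a Borel measure that is finite
on compact sets and positive on nonempty open sets.\<close>

definition riemannian_like_measure :: "'a::{metric_space,heine_borel} measure \<Rightarrow> bool" where
  "riemannian_like_measure M \<longleftrightarrow>
     sets M = sets borel \<and>
     (\<forall>K. compact K \<longrightarrow> emeasure M K < \<infinity>) \<and>
     (\<forall>U. open U \<and> U \<noteq> {} \<longrightarrow> emeasure M U > 0)"

definition Linf_loc :: "'a::metric_space measure \<Rightarrow> ('a \<Rightarrow> real) \<Rightarrow> bool" where
  "Linf_loc M V \<longleftrightarrow> V \<in> borel_measurable M \<and>
     (\<forall>K. compact K \<longrightarrow> (\<exists>C. AE x in M. x \<in> K \<longrightarrow> \<bar>V x\<bar> \<le> C))"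

definition ess_lim_infty :: "'a::metric_space measure \<Rightarrow> 'a \<Rightarrow> ('a \<Rightarrow> real) \<Rightarrow> bool" where
  "ess_lim_infty M p0 V \<longleftrightarrow>
     (\<forall>L>0. \<exists>R>0. AE p in M. dist p p0 \<ge> R \<longrightarrow> V p \<ge> L)"

definition sigma_V :: "'a measure \<Rightarrow> ('a \<Rightarrow> real) \<Rightarrow> real \<Rightarrow> ennreal" where
  "sigma_V M V lam = emeasure M {x \<in> space M. V x \<le> lam}"

definition doubling_cond :: "'a measure \<Rightarrow> ('a \<Rightarrow> real) \<Rightarrow> bool" where
  "doubling_cond M V \<longleftrightarrow>
     (\<exists>C\<^sub>V>0. \<exists>lam0>0. \<forall>lam\<ge>lam0.
        sigma_V M V (2 * lam) \<le> ennreal C\<^sub>V * sigma_V M V lam)"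

end

theory Submission
  imports Defs
begin

text \<open>Write \<open>Z(s) = \<integral> exp (- s V)\<close>. Since \<open>exp (- (1 - \<delta>) y) - exp (- y) \<le> 4 \<delta> exp (- y / 4)\<close>
  for \<open>y \<ge> 0\<close>, we get \<open>0 \<le> Z((1 - \<delta>) t) - Z(t) \<le> 4 \<delta> Z(t / 4)\<close>, so it suffices to show
  \<open>Z(t / 4) \<le> A Z(t)\<close> uniformly in \<open>t \<in> (0, 1]\<close>. Put \<open>L = \<Lambda> / t\<close>. Trivially
  \<open>Z(t) \<ge> exp (- \<Lambda>) \<sigma>(L)\<close>. Splitting into the dyadic layers \<open>2^(k-1) L < V \<le> 2^k L\<close> and
  iterating the doubling condition gives \<open>Z(t / 4) \<le> \<Sum>\<^sub>k (C exp (- \<Lambda> / 8))^k \<sigma>(L) \<le> 2 \<sigma>(L)\<close>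
  once \<open>\<Lambda>\<close> is so large that \<open>C exp (- \<Lambda> / 8) \<le> 1 / 2\<close>. The essential limit of \<open>V\<close> only
  serves to make \<open>\<sigma>(L)\<close> finite, so that the integrals exist.\<close>

lemma exp_shrink_diff_le:
  fixes y d :: real
  assumes "0 \<le> y" "0 \<le> d" "d \<le> 1 / 2"
  shows "exp (- (1 - d) * y) - exp (- y) \<le> 4 * d * exp (- y / 4)"
proof -
  have "exp (- (1 - d) * y) - exp (- y) = exp (- (1 - d) * y) * (1 - exp (- (d * y)))"
    by (simp add: algebra_simps flip: exp_add)
  also have "\<dots> \<le> exp (- y / 2) * (d * y)"
  proof (rule mult_mono)
    have "d * y \<le> y / 2" using assms mult_right_mono[of d "1 / 2" y] by simp
    then have "- (1 - d) * y \<le> - y / 2" by (simp add: algebra_simps)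
    then show "exp (- (1 - d) * y) \<le> exp (- y / 2)" by simp
    show "1 - exp (- (d * y)) \<le> d * y" using exp_ge_add_one_self[of "- (d * y)"] by simp
  qed (use assms in auto)
  also have "\<dots> \<le> exp (- y / 2) * (d * (4 * exp (y / 4)))"
  proof -
    have "y \<le> 4 * exp (y / 4)" using exp_ge_add_one_self[of "y / 4"] by linarith
    then show ?thesis using assms by (intro mult_left_mono) auto
  qed
  also have "\<dots> = 4 * d * exp (- y / 4)"
    by (simp add: mult_ac flip: exp_add)
  finally show ?thesis .
qed

lemma exp_le_power_at_dyadic_level:
  fixes s L v :: real
  assumes "0 < s" "0 < L" "0 \<le> v"
  obtains k :: nat where "v \<le> 2 ^ k * L" "exp (- s * v) \<le> exp (- s * L / 2) ^ k"
proof -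
  obtain n :: nat where "v / L < 2 ^ n" using real_arch_pow[of 2 "v / L"] by auto
  then have "v \<le> 2 ^ n * L" using assms by (simp add: field_simps)
  define k where "k = (LEAST k. v \<le> 2 ^ k * L)"
  have level: "v \<le> 2 ^ k * L" unfolding k_def by (rule LeastI) fact
  have "exp (- s * v) \<le> exp (- s * L / 2) ^ k"
  proof (cases k)
    case 0
    then show ?thesis using assms by simp
  next
    case (Suc j)
    then have "2 ^ j * L < v" using not_less_Least[of j "\<lambda>k. v \<le> 2 ^ k * L"] k_def by auto
    moreover have "real (Suc j) \<le> 2 * 2 ^ j"
    proof -
      have "Suc j < 2 ^ Suc j" by (rule less_exp)
      then have "real (Suc j) < real (2 ^ Suc j)" by (simp only: of_nat_less_iff)
      then show ?thesis by simp
    qed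
    ultimately have "real k * (s * L / 2) \<le> s * (2 ^ j * L)"
      using Suc assms mult_right_mono[of "real (Suc j)" "2 * 2 ^ j" "s * L / 2"] by simp
    also have "\<dots> \<le> s * v" using \<open>2 ^ j * L < v\<close> assms by simp
    finally have "real k * (s * L / 2) \<le> s * v" .
    then show ?thesis by (simp flip: exp_of_nat_mult)
  qed
  with level show ?thesis by (rule that)
qed

lemma ennreal_term_le_suminf: "f k \<le> (\<Sum>i. f i :: ennreal)"
  using ennreal_suminf_lessD[of f "f k" k] by (meson less_irrefl not_le)

lemma suminf_ennreal_half_powers: "(\<Sum>k. ennreal ((1 / 2) ^ k)) = 2"
proof -
  have "(\<Sum>k. ennreal ((1 / 2) ^ k)) = ennreal 2"
  proof (rule suminf_ennreal_eq)
    show "(\<lambda>k. (1 / 2 :: real) ^ k) sums 2"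
      using geometric_sums[of "1 / 2 :: real"] by simp
  qed simp
  then show ?thesis by simp
qed

lemma sigma_V_pow2_le:
  assumes doubling: "\<And>lam. lam0 \<le> lam \<Longrightarrow> sigma_V M V (2 * lam) \<le> ennreal C * sigma_V M V lam"
    and "lam0 \<le> L" "0 \<le> L"
  shows "sigma_V M V (2 ^ k * L) \<le> ennreal C ^ k * sigma_V M V L"
proof (induction k)
  case 0
  then show ?case by simp
next
  case (Suc k)
  have "L \<le> 2 ^ k * L" using assms(3) by (simp add: mult_le_cancel_right1)
  then have "sigma_V M V (2 ^ Suc k * L) \<le> ennreal C * sigma_V M V (2 ^ k * L)"
    using doubling[of "2 ^ k * L"] assms(2) by (simp add: mult.assoc)
  also have "\<dots> \<le> ennreal C * (ennreal C ^ k * sigma_V M V L)"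
    using Suc by (intro mult_left_mono) auto
  finally show ?case by (simp add: mult.assoc)
qed

lemma nn_integral_exp_le_suminf_sigma_V:
  assumes [measurable]: "V \<in> borel_measurable M"
    and "AE x in M. 0 \<le> V x" "0 < s" "0 < L"
  shows "(\<integral>\<^sup>+x. exp (- s * V x) \<partial>M)
           \<le> (\<Sum>k. ennreal (exp (- s * L / 2) ^ k) * sigma_V M V (2 ^ k * L))"
proof -
  let ?q = "exp (- s * L / 2)"
  let ?S = "\<lambda>k::nat. {x \<in> space M. V x \<le> 2 ^ k * L}"
  have "AE x in M. ennreal (exp (- s * V x)) \<le> (\<Sum>k. ennreal (?q ^ k) * indicator (?S k) x)"
    using assms(2) AE_space
  proof eventually_elim
    fix x assume x: "0 \<le> V x" "x \<in> space M"
    obtain k where "V x \<le> 2 ^ k * L" "exp (- s * V x) \<le> ?q ^ k"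
      using exp_le_power_at_dyadic_level[OF assms(3,4) x(1)] .
    then have "ennreal (exp (- s * V x)) \<le> ennreal (?q ^ k) * indicator (?S k) x"
      using x by (simp add: ennreal_leI)
    also have "\<dots> \<le> (\<Sum>k. ennreal (?q ^ k) * indicator (?S k) x)"
      by (rule ennreal_term_le_suminf)
    finally show "ennreal (exp (- s * V x)) \<le> (\<Sum>k. ennreal (?q ^ k) * indicator (?S k) x)" .
  qed
  then have "(\<integral>\<^sup>+x. exp (- s * V x) \<partial>M)
      \<le> (\<integral>\<^sup>+x. (\<Sum>k. ennreal (?q ^ k) * indicator (?S k) x) \<partial>M)"
    by (rule nn_integral_mono_AE)
  also have "\<dots> = (\<Sum>k. \<integral>\<^sup>+x. ennreal (?q ^ k) * indicator (?S k) x \<partial>M)"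
    by (rule nn_integral_suminf) measurable
  also have "\<dots> = (\<Sum>k. ennreal (?q ^ k) * sigma_V M V (2 ^ k * L))"
    by (subst nn_integral_cmult_indicator) (auto simp: sigma_V_def)
  finally show ?thesis .
qed

lemma nn_integral_exp_le_sigma_V:
  assumes [measurable]: "V \<in> borel_measurable M"
    and "AE x in M. 0 \<le> V x" "0 < s" "0 < L" "lam0 \<le> L"
    and doubling: "\<And>lam. lam0 \<le> lam \<Longrightarrow> sigma_V M V (2 * lam) \<le> ennreal C * sigma_V M V lam"
    and C: "0 \<le> C" "C * exp (- s * L / 2) \<le> 1 / 2"
  shows "(\<integral>\<^sup>+x. exp (- s * V x) \<partial>M) \<le> 2 * sigma_V M V L"
proof -
  let ?q = "exp (- s * L / 2)"
  have "(\<integral>\<^sup>+x. exp (- s * V x) \<partial>M) \<le> (\<Sum>k. ennreal (?q ^ k) * sigma_V M V (2 ^ k * L))"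
    using assms(1-4) by (rule nn_integral_exp_le_suminf_sigma_V)
  also have "\<dots> \<le> (\<Sum>k. ennreal ((1 / 2) ^ k) * sigma_V M V L)"
  proof (intro suminf_le summableI)
    fix k
    have "ennreal (?q ^ k) * sigma_V M V (2 ^ k * L) \<le> ennreal (?q ^ k) * (ennreal C ^ k * sigma_V M V L)"
      using sigma_V_pow2_le[OF doubling] assms(4,5) by (intro mult_left_mono) auto
    also have "\<dots> = ennreal ((C * ?q) ^ k) * sigma_V M V L"
      using C(1) by (simp add: ennreal_mult ennreal_power power_mult_distrib mult_ac)
    also have "\<dots> \<le> ennreal ((1 / 2) ^ k) * sigma_V M V L"
      using C by (intro mult_right_mono ennreal_leI power_mono) auto
    finally show "ennreal (?q ^ k) * sigma_V M V (2 ^ k * L) \<le> ennreal ((1 / 2) ^ k) * sigma_V M V L" .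
  qed
  also have "\<dots> = 2 * sigma_V M V L"
    by (simp add: suminf_ennreal_half_powers)
  finally show ?thesis .
qed

lemma sigma_V_le_nn_integral_exp:
  assumes [measurable]: "V \<in> borel_measurable M" and "0 \<le> s"
  shows "ennreal (exp (- s * L)) * sigma_V M V L \<le> (\<integral>\<^sup>+x. exp (- s * V x) \<partial>M)"
proof -
  have "ennreal (exp (- s * L)) * sigma_V M V L
      = (\<integral>\<^sup>+x. ennreal (exp (- s * L)) * indicator {x \<in> space M. V x \<le> L} x \<partial>M)"
    by (subst nn_integral_cmult_indicator) (auto simp: sigma_V_def)
  also have "\<dots> \<le> (\<integral>\<^sup>+x. exp (- s * V x) \<partial>M)"
  proof (intro nn_integral_mono)
    fix x
    have "V x \<le> L \<Longrightarrow> s * V x \<le> s * L" using assms(2) by (rule mult_left_mono[rotated])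
    then show "ennreal (exp (- s * L)) * indicator {x \<in> space M. V x \<le> L} x \<le> ennreal (exp (- s * V x))"
      by (auto simp: indicator_def intro: ennreal_leI)
  qed
  finally show ?thesis .
qed

lemma sigma_V_less_top:
  fixes M :: "'a::{metric_space,heine_borel} measure"
  assumes "sets M = sets borel" "\<And>K. compact K \<Longrightarrow> emeasure M K < \<infinity>"
    and "ess_lim_infty M p0 V"
  shows "sigma_V M V L < \<infinity>"
proof -
  obtain R where "AE p in M. R \<le> dist p p0 \<longrightarrow> max L 0 + 1 \<le> V p"
    using assms(3) unfolding ess_lim_infty_def by (meson add_nonneg_pos max.cobounded2 zero_less_one)
  then have "sigma_V M V L \<le> emeasure M (cball p0 R)"
    unfolding sigma_V_def using assms(1)
    by (intro emeasure_mono_AE) (auto elim!: eventually_mono simp: dist_commute)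
  also have "\<dots> < \<infinity>" using assms(2) by simp
  finally show ?thesis .
qed

lemma integrable_exp_neg_mono:
  fixes V :: "'a \<Rightarrow> real"
  assumes "integrable M (\<lambda>x. exp (- s * V x))" "V \<in> borel_measurable M"
    and "AE x in M. 0 \<le> V x" "s \<le> s'"
  shows "integrable M (\<lambda>x. exp (- s' * V x))"
proof (rule Bochner_Integration.integrable_bound[OF assms(1)])
  show "(\<lambda>x. exp (- s' * V x)) \<in> borel_measurable M" using assms(2) by measurable
  show "AE x in M. norm (exp (- s' * V x)) \<le> norm (exp (- s * V x))"
    using assms(3) by eventually_elim (use assms(4) in \<open>simp add: mult_right_mono\<close>)
qed

lemma integral_exp_pos:
  fixes f :: "'a \<Rightarrow> real"
  assumes "integrable M (\<lambda>x. exp (f x))" "emeasure M (space M) \<noteq> 0"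
  shows "0 < (\<integral>x. exp (f x) \<partial>M)"
proof -
  have "(\<integral>x. exp (f x) \<partial>M) \<noteq> 0"
    using assms by (subst integral_nonneg_eq_0_iff_AE) (auto simp: eventually_False ae_filter_eq_bot_iff)
  moreover have "0 \<le> (\<integral>x. exp (f x) \<partial>M)" by simp
  ultimately show ?thesis by linarith
qed

lemma integral_exp_shrink_le:
  fixes V :: "'a \<Rightarrow> real"
  assumes [measurable]: "V \<in> borel_measurable M"
    and V_nonneg: "AE x in M. 0 \<le> V x"
    and int: "integrable M (\<lambda>x. exp (- (t / 4) * V x))"
    and "0 \<le> t" "0 \<le> \<delta>" "\<delta> \<le> 1 / 2"
  shows "(\<integral>x. exp (- t * V x) \<partial>M) \<le> (\<integral>x. exp (- t * (1 - \<delta>) * V x) \<partial>M)"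
    and "(\<integral>x. exp (- t * (1 - \<delta>) * V x) \<partial>M) - (\<integral>x. exp (- t * V x) \<partial>M)
           \<le> 4 * \<delta> * (\<integral>x. exp (- (t / 4) * V x) \<partial>M)"
proof -
  have int_t: "integrable M (\<lambda>x. exp (- t * V x))"
    using integrable_exp_neg_mono[OF int] assms(4) V_nonneg by simp
  have "t / 4 \<le> t * (1 - \<delta>)" using assms(4-6) mult_left_mono[of "1 / 2" "1 - \<delta>" t] by simp
  then have int_\<delta>: "integrable M (\<lambda>x. exp (- t * (1 - \<delta>) * V x))"
    using integrable_exp_neg_mono[OF int, of "t * (1 - \<delta>)"] V_nonneg by simp
  have "t * (1 - \<delta>) \<le> t" using assms(4,5) by (simp add: algebra_simps)
  then show "(\<integral>x. exp (- t * V x) \<partial>M) \<le> (\<integral>x. exp (- t * (1 - \<delta>) * V x) \<partial>M)"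
    using int_t int_\<delta> V_nonneg
    by (intro integral_mono_AE) (auto elim!: eventually_mono intro!: mult_right_mono)
  have "(\<integral>x. exp (- t * (1 - \<delta>) * V x) \<partial>M) - (\<integral>x. exp (- t * V x) \<partial>M)
      = (\<integral>x. exp (- t * (1 - \<delta>) * V x) - exp (- t * V x) \<partial>M)"
    using int_t int_\<delta> by simp
  also have "\<dots> \<le> (\<integral>x. 4 * \<delta> * exp (- (t / 4) * V x) \<partial>M)"
  proof (rule integral_mono_AE)
    show "AE x in M. exp (- t * (1 - \<delta>) * V x) - exp (- t * V x) \<le> 4 * \<delta> * exp (- (t / 4) * V x)"
      using V_nonneg
    proof eventually_elim
      fix x assume "0 \<le> V x"
      then have "0 \<le> t * V x" using assms(4) by simp
      then have "exp (- (1 - \<delta>) * (t * V x)) - exp (- (t * V x)) \<le> 4 * \<delta> * exp (- (t * V x) / 4)"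
        using assms(5,6) by (rule exp_shrink_diff_le)
      moreover have "exp (- t * (1 - \<delta>) * V x) = exp (- (1 - \<delta>) * (t * V x))"
        "exp (- t * V x) = exp (- (t * V x))" "exp (- (t / 4) * V x) = exp (- (t * V x) / 4)"
        by (simp_all add: algebra_simps)
      ultimately show "exp (- t * (1 - \<delta>) * V x) - exp (- t * V x) \<le> 4 * \<delta> * exp (- (t / 4) * V x)"
        by (simp only:)
    qed
  qed (use int_t int_\<delta> int in simp_all)
  finally show "(\<integral>x. exp (- t * (1 - \<delta>) * V x) \<partial>M) - (\<integral>x. exp (- t * V x) \<partial>M)
      \<le> 4 * \<delta> * (\<integral>x. exp (- (t / 4) * V x) \<partial>M)"
    by simp
qed

lemma abs_divide_sub_one_le:
  fixes a b c :: real
  assumes "0 < a" "a \<le> b" "b - a \<le> c * a"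
  shows "\<bar>a / b - 1\<bar> \<le> c"
proof -
  have "0 \<le> c * a" using assms(2,3) by linarith
  with assms(1) have "0 \<le> c" by (simp add: zero_le_mult_iff)
  then have "c * a \<le> c * b" by (rule mult_left_mono[OF assms(2)])
  with assms(3) have "b - a \<le> c * b" by linarith
  moreover have "\<bar>a / b - 1\<bar> = (b - a) / b" using assms(1,2) by (simp add: field_simps)
  ultimately show ?thesis using assms(1,2) by (simp add: pos_divide_le_eq)
qed

lemma integral_exp_quarter_le_at_level:
  fixes M :: "'a::{metric_space,heine_borel} measure" and V :: "'a \<Rightarrow> real"
  assumes "sets M = sets borel" "\<And>K. compact K \<Longrightarrow> emeasure M K < \<infinity>"
    and [measurable]: "V \<in> borel_measurable M" and V_nonneg: "AE x in M. 0 \<le> V x"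
    and "ess_lim_infty M p0 V"
    and doubling: "\<And>lam. lam0 \<le> lam \<Longrightarrow> sigma_V M V (2 * lam) \<le> ennreal C * sigma_V M V lam"
    and "0 \<le> C" "C * exp (- t * L / 8) \<le> 1 / 2" "0 < t" "0 < L" "lam0 \<le> L"
  shows "integrable M (\<lambda>x. exp (- (t / 4) * V x))"
    and "(\<integral>x. exp (- (t / 4) * V x) \<partial>M) \<le> 2 * exp (t * L) * (\<integral>x. exp (- t * V x) \<partial>M)"
proof -
  have upper: "(\<integral>\<^sup>+x. exp (- (t / 4) * V x) \<partial>M) \<le> 2 * sigma_V M V L"
    using assms(7-11) by (intro nn_integral_exp_le_sigma_V[OF _ V_nonneg _ _ _ doubling]) auto
  have lower: "ennreal (exp (- t * L)) * sigma_V M V L \<le> (\<integral>\<^sup>+x. exp (- t * V x) \<partial>M)"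
    using sigma_V_le_nn_integral_exp[of V M t L] assms(9) by simp
  obtain \<sigma> where \<sigma>: "sigma_V M V L = ennreal \<sigma>" "0 \<le> \<sigma>"
    using sigma_V_less_top[OF assms(1,2,5), of L] by (cases "sigma_V M V L") auto
  show int: "integrable M (\<lambda>x. exp (- (t / 4) * V x))"
    using order.strict_trans1[OF upper] \<sigma> by (intro integrableI_nonneg) (auto simp: ennreal_mult_less_top)
  moreover have "integrable M (\<lambda>x. exp (- t * V x))"
    using integrable_exp_neg_mono[OF int _ V_nonneg, of t] assms(9) by simp
  ultimately have "ennreal (\<integral>x. exp (- (t / 4) * V x) \<partial>M) \<le> ennreal (2 * \<sigma>)"
    and "ennreal (exp (- t * L) * \<sigma>) \<le> ennreal (\<integral>x. exp (- t * V x) \<partial>M)"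
    using upper lower \<sigma> by (simp_all add: nn_integral_eq_integral ennreal_mult)
  then have "(\<integral>x. exp (- (t / 4) * V x) \<partial>M) \<le> 2 * \<sigma>"
    and "exp (- t * L) * \<sigma> \<le> (\<integral>x. exp (- t * V x) \<partial>M)"
    using \<open>0 \<le> \<sigma>\<close> by (simp_all add: ennreal_le_iff)
  then show "(\<integral>x. exp (- (t / 4) * V x) \<partial>M) \<le> 2 * exp (t * L) * (\<integral>x. exp (- t * V x) \<partial>M)"
    by (simp add: exp_minus field_simps)
qed

lemma integral_exp_quarter_le:
  fixes M :: "'a::{metric_space,heine_borel} measure" and V :: "'a \<Rightarrow> real"
  assumes "sets M = sets borel" "\<And>K. compact K \<Longrightarrow> emeasure M K < \<infinity>"
    and "V \<in> borel_measurable M" "AE x in M. 0 \<le> V x"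
    and "ess_lim_infty M p0 V" "doubling_cond M V"
  obtains A :: real where "0 < A"
    "\<And>t. 0 < t \<Longrightarrow> t \<le> 1 \<Longrightarrow> integrable M (\<lambda>x. exp (- (t / 4) * V x))"
    "\<And>t. 0 < t \<Longrightarrow> t \<le> 1 \<Longrightarrow>
       (\<integral>x. exp (- (t / 4) * V x) \<partial>M) \<le> A * (\<integral>x. exp (- t * V x) \<partial>M)"
proof -
  obtain C lam0 where "0 < C" "0 < lam0"
    and doubling: "\<And>lam. lam0 \<le> lam \<Longrightarrow> sigma_V M V (2 * lam) \<le> ennreal C * sigma_V M V lam"
    using assms(6) unfolding doubling_cond_def by blast
  define \<Lambda> where "\<Lambda> = max lam0 (8 * ln (2 * C))"
  have "C * exp (- \<Lambda> / 8) \<le> 1 / 2"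
  proof -
    have "exp (- \<Lambda> / 8) \<le> exp (- ln (2 * C))" unfolding \<Lambda>_def by simp
    also have "\<dots> = 1 / (2 * C)" using \<open>0 < C\<close> by (simp add: exp_minus inverse_eq_divide)
    finally show ?thesis using \<open>0 < C\<close> by (simp add: field_simps)
  qed
  moreover have "lam0 \<le> \<Lambda> / t" "t * (\<Lambda> / t) = \<Lambda>" if "0 < t" "t \<le> 1" for t
  proof -
    have "0 < \<Lambda>" "lam0 \<le> \<Lambda>" unfolding \<Lambda>_def using \<open>0 < lam0\<close> by auto
    moreover have "\<Lambda> \<le> \<Lambda> / t" using that \<open>0 < \<Lambda>\<close> by (simp add: field_simps mult_left_le)
    ultimately show "lam0 \<le> \<Lambda> / t" "t * (\<Lambda> / t) = \<Lambda>" using that by simp_all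
  qed
  ultimately have "integrable M (\<lambda>x. exp (- (t / 4) * V x)) \<and>
      (\<integral>x. exp (- (t / 4) * V x) \<partial>M) \<le> 2 * exp \<Lambda> * (\<integral>x. exp (- t * V x) \<partial>M)"
    if "0 < t" "t \<le> 1" for t
    using integral_exp_quarter_le_at_level[where ?lam0.0 = lam0 and C = C and t = t and L = "\<Lambda> / t",
        OF assms(1-5) doubling]
      that \<open>0 < C\<close> \<open>0 < lam0\<close>
    by (simp add: mult.assoc)
  then show ?thesis by (intro that[of "2 * exp \<Lambda>"]) auto
qed

lemma integral_exp_ratio_le_uniform:
  fixes M :: "'a::{metric_space,heine_borel} measure" and V :: "'a \<Rightarrow> real"
  assumes "sets M = sets borel" "\<And>K. compact K \<Longrightarrow> emeasure M K < \<infinity>"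
    and "emeasure M (space M) \<noteq> 0"
    and V: "V \<in> borel_measurable M" and V_nonneg: "AE x in M. 0 \<le> V x"
    and "ess_lim_infty M p0 V" "doubling_cond M V"
  obtains A :: real where "0 < A"
    "\<And>t \<delta>. 0 < t \<Longrightarrow> t \<le> 1 \<Longrightarrow> 0 \<le> \<delta> \<Longrightarrow> \<delta> \<le> 1 / 2 \<Longrightarrow>
       \<bar>(\<integral>x. exp (- t * V x) \<partial>M) / (\<integral>x. exp (- t * (1 - \<delta>) * V x) \<partial>M) - 1\<bar> \<le> 4 * \<delta> * A"
proof -
  obtain A where "0 < A"
    and int: "\<And>t. 0 < t \<Longrightarrow> t \<le> 1 \<Longrightarrow> integrable M (\<lambda>x. exp (- (t / 4) * V x))"
    and comp: "\<And>t. 0 < t \<Longrightarrow> t \<le> 1 \<Longrightarrow>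
                 (\<integral>x. exp (- (t / 4) * V x) \<partial>M) \<le> A * (\<integral>x. exp (- t * V x) \<partial>M)"
    using integral_exp_quarter_le[OF assms(1,2) V V_nonneg assms(6,7)] by blast
  have "\<bar>(\<integral>x. exp (- t * V x) \<partial>M) / (\<integral>x. exp (- t * (1 - \<delta>) * V x) \<partial>M) - 1\<bar> \<le> 4 * \<delta> * A"
    if t: "0 < t" "t \<le> 1" and \<delta>: "0 \<le> \<delta>" "\<delta> \<le> 1 / 2" for t \<delta>
  proof (rule abs_divide_sub_one_le)
    note shrink = integral_exp_shrink_le[OF V V_nonneg int[OF t] _ \<delta>]
    show "0 < (\<integral>x. exp (- t * V x) \<partial>M)"
      using integrable_exp_neg_mono[OF int[OF t] V V_nonneg, of t] t assms(3)
      by (intro integral_exp_pos) auto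
    show "(\<integral>x. exp (- t * V x) \<partial>M) \<le> (\<integral>x. exp (- t * (1 - \<delta>) * V x) \<partial>M)"
      using shrink(1) t by simp
    have "(\<integral>x. exp (- t * (1 - \<delta>) * V x) \<partial>M) - (\<integral>x. exp (- t * V x) \<partial>M)
        \<le> 4 * \<delta> * (\<integral>x. exp (- (t / 4) * V x) \<partial>M)"
      using shrink(2) t by simp
    also have "\<dots> \<le> 4 * \<delta> * (A * (\<integral>x. exp (- t * V x) \<partial>M))"
      using comp[OF t] \<delta> by (intro mult_left_mono) auto
    finally show "(\<integral>x. exp (- t * (1 - \<delta>) * V x) \<partial>M) - (\<integral>x. exp (- t * V x) \<partial>M)
        \<le> 4 * \<delta> * A * (\<integral>x. exp (- t * V x) \<partial>M)"
      by (simp add: mult_ac)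
  qed
  with \<open>0 < A\<close> show ?thesis by (rule that)
qed

theorem corollary3p1:
  fixes M :: "'a::{metric_space,heine_borel} measure"
    and V :: "'a \<Rightarrow> real" and p0 :: 'a
  assumes "riemannian_like_measure M"
    and "Linf_loc M V"
    and "AE x in M. V x \<ge> 1"
    and "ess_lim_infty M p0 V"
    and "doubling_cond M V"
  shows "\<forall>\<epsilon>>0. \<exists>\<delta>\<^sub>0>0. \<forall>\<delta>. 0 < \<delta> \<and> \<delta> < \<delta>\<^sub>0 \<longrightarrow>
           (\<forall>t\<in>{0<..1}.
              \<bar>(\<integral>x. exp (- t * V x) \<partial>M) / (\<integral>x. exp (- t * (1 - \<delta>) * V x) \<partial>M) - 1\<bar> < \<epsilon>)"
proof (intro allI impI)
  fix \<epsilon> :: real assume "0 < \<epsilon>"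
  have sets: "sets M = sets borel" and fin: "\<And>K. compact K \<Longrightarrow> emeasure M K < \<infinity>"
    and "emeasure M UNIV > 0"
    using assms(1) unfolding riemannian_like_measure_def by auto
  then have "emeasure M (space M) \<noteq> 0" using sets_eq_imp_space_eq[OF sets] by simp
  moreover have V: "V \<in> borel_measurable M" using assms(2) unfolding Linf_loc_def by simp
  moreover have "AE x in M. 0 \<le> V x" using assms(3) by eventually_elim simp
  ultimately obtain A where "0 < A"
    and ratio: "\<And>t \<delta>. 0 < t \<Longrightarrow> t \<le> 1 \<Longrightarrow> 0 \<le> \<delta> \<Longrightarrow> \<delta> \<le> 1 / 2 \<Longrightarrow>
       \<bar>(\<integral>x. exp (- t * V x) \<partial>M) / (\<integral>x. exp (- t * (1 - \<delta>) * V x) \<partial>M) - 1\<bar> \<le> 4 * \<delta> * A"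
    using integral_exp_ratio_le_uniform[OF sets fin _ V _ assms(4,5)] by blast
  define \<delta>\<^sub>0 where "\<delta>\<^sub>0 = min (1 / 2) (\<epsilon> / (4 * A))"
  have "\<bar>(\<integral>x. exp (- t * V x) \<partial>M) / (\<integral>x. exp (- t * (1 - \<delta>) * V x) \<partial>M) - 1\<bar> < \<epsilon>"
    if "0 < \<delta>" "\<delta> < \<delta>\<^sub>0" "t \<in> {0<..1}" for \<delta> t
  proof -
    have "4 * \<delta> * A < \<epsilon>" using that(2) \<open>0 < A\<close> unfolding \<delta>\<^sub>0_def by (simp add: field_simps)
    with ratio[of t \<delta>] that show ?thesis unfolding \<delta>\<^sub>0_def by simp
  qed
  moreover have "0 < \<delta>\<^sub>0" unfolding \<delta>\<^sub>0_def using \<open>0 < \<epsilon>\<close> \<open>0 < A\<close> by simp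
  ultimately show "\<exists>\<delta>\<^sub>0>0. \<forall>\<delta>. 0 < \<delta> \<and> \<delta> < \<delta>\<^sub>0 \<longrightarrow> (\<forall>t\<in>{0<..1}.
      \<bar>(\<integral>x. exp (- t * V x) \<partial>M) / (\<integral>x. exp (- t * (1 - \<delta>) * V x) \<partial>M) - 1\<bar> < \<epsilon>)"
    by blast
qed

end
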